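(* Let $(a,\alpha)\neq(0,0)$. There exist $\delta_0>0$ and $c>0$ such that for all $N$, all $L\le\delta_0N$, all $\mathscr P\subseteq\{1,\dots,N-1\}$ with $\min\mathscr P<L$, and all $\phi:\{-1,\dots,N+1\}\to\mathbb R$ with $\phi(-1)=N^2a-N\alpha$, $\phi(0)=N^2a$ and $\phi(k)=0$ for $k\in\mathscr P$, one has $\mathcal H_{[-1,N+1]}(\phi)\ge c\,N^2/L$.
   Context: $\mathcal H_{[-1,N+1]}(\phi)=\sum_{k=0}^{N}\frac12(\phi_{k+1}+\phi_{k-1}-2\phi_k)^2$. *)

theory Defs
  imports Complex_Main
begin

text \<open>Energy H_{[-1,N+1]}(phi) = sum_{k=0}^{N} (1/2) (phi(k+1) + phi(k-1) - 2 phi(k))^2,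
  for phi defined on the integers (only values on {-1..N+1} matter).\<close>
definition H :: "nat \<Rightarrow> (int \<Rightarrow> real) \<Rightarrow> real" where
  "H N \<phi> = (\<Sum>k\<in>{0..int N}. (1/2) * (\<phi> (k+1) + \<phi> (k-1) - 2 * \<phi> k)^2)"

end

theory Submission
  imports Defs "HOL-Analysis.Convex"
begin

text \<open>Discrete Taylor expansion from the left boundary: if \<open>\<phi>\<close> vanishes at some \<open>p\<close>, then
  \<open>\<phi>(0) + p (\<phi>(0) - \<phi>(-1)) = -\<Sum>\<^sub>i\<^sub><\<^sub>p (p - i) \<Delta>\<phi>(i)\<close>, and Cauchy-Schwarz bounds the square of
  the left-hand side by \<open>p\<^sup>3 \<cdot> 2 H(\<phi>)\<close>.  With the prescribed boundary values the left-hand side is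
  \<open>N (N a + p \<alpha>)\<close>, which for \<open>0 < p \<le> \<delta>\<^sub>0 N\<close> is at least a constant multiple of \<open>N p\<close>; hence
  \<open>N\<^sup>2 \<lesssim> p H(\<phi>) < L H(\<phi>)\<close> for the smallest zero \<open>p\<close> of \<open>\<phi>\<close>.\<close>

definition second_difference :: "(int \<Rightarrow> real) \<Rightarrow> int \<Rightarrow> real" where
  "second_difference \<phi> k = \<phi> (k + 1) + \<phi> (k - 1) - 2 * \<phi> k"

lemma first_difference_eq_sum_second_difference:
  "\<phi> (int j) - \<phi> (int j - 1) = (\<phi> 0 - \<phi> (-1)) + (\<Sum>i<j. second_difference \<phi> (int i))"
  by (induction j) (simp_all add: second_difference_def algebra_simps)

lemma discrete_taylor:
  "\<phi> (int p) = \<phi> 0 + real p * (\<phi> 0 - \<phi> (-1)) + (\<Sum>i<p. real (p - i) * second_difference \<phi> (int i))"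
proof (induction p)
  case 0
  then show ?case by simp
next
  case (Suc p)
  have "(\<Sum>i<Suc p. real (Suc p - i) * second_difference \<phi> (int i))
      = (\<Sum>i<Suc p. real (p - i) * second_difference \<phi> (int i) + second_difference \<phi> (int i))"
    by (rule sum.cong) (auto simp: Suc_diff_le algebra_simps)
  also have "\<dots> = (\<Sum>i<p. real (p - i) * second_difference \<phi> (int i))
                 + (\<Sum>i<Suc p. second_difference \<phi> (int i))"
    by (simp add: sum.distrib)
  finally show ?case
    using Suc first_difference_eq_sum_second_difference[of \<phi> "Suc p"] by (simp add: algebra_simps)
qed

lemma H_eq_sum_second_difference:
  "H N \<phi> = (\<Sum>k\<in>{0..int N}. (second_difference \<phi> k)\<^sup>2) / 2"
  by (simp add: H_def second_difference_def sum_divide_distrib)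

lemma H_nonneg: "0 \<le> H N \<phi>"
  by (simp add: H_eq_sum_second_difference sum_nonneg)

lemma sum_second_difference_sq_le_H:
  assumes "p \<le> N + 1"
  shows "(\<Sum>i<p. (second_difference \<phi> (int i))\<^sup>2) \<le> 2 * H N \<phi>"
proof -
  have "(\<Sum>i<p. (second_difference \<phi> (int i))\<^sup>2) = (\<Sum>k\<in>int ` {..<p}. (second_difference \<phi> k)\<^sup>2)"
    by (simp add: sum.reindex)
  also have "\<dots> \<le> (\<Sum>k\<in>{0..int N}. (second_difference \<phi> k)\<^sup>2)"
    using assms by (intro sum_mono2) auto
  finally show ?thesis
    by (simp add: H_eq_sum_second_difference)
qed

lemma boundary_term_sq_le_H_of_root:
  assumes "p \<le> N + 1" and "\<phi> (int p) = 0"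
  shows "(\<phi> 0 + real p * (\<phi> 0 - \<phi> (-1)))\<^sup>2 \<le> real p ^ 3 * (2 * H N \<phi>)"
proof -
  let ?\<Delta> = "second_difference \<phi>"
  have "(\<phi> 0 + real p * (\<phi> 0 - \<phi> (-1)))\<^sup>2 = (\<Sum>i<p. real (p - i) * ?\<Delta> (int i))\<^sup>2"
    using discrete_taylor[of \<phi> p] assms(2) by (simp add: power2_commute add_eq_0_iff2)
  also have "\<dots> \<le> (\<Sum>i<p. (real (p - i))\<^sup>2) * (\<Sum>i<p. (?\<Delta> (int i))\<^sup>2)"
    by (rule Cauchy_Schwarz_ineq_sum)
  also have "\<dots> \<le> (\<Sum>i<p. (real p)\<^sup>2) * (2 * H N \<phi>)"
    using sum_second_difference_sq_le_H[OF assms(1)]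
    by (intro mult_mono sum_mono power_mono) (auto simp: sum_nonneg)
  also have "\<dots> = real p ^ 3 * (2 * H N \<phi>)"
    by (simp add: power2_eq_square power3_eq_cube)
  finally show ?thesis .
qed

lemma affine_form_lower_bound:
  fixes a \<alpha> :: real
  assumes "(a, \<alpha>) \<noteq> (0, 0)"
  obtains \<delta> c where "\<delta> > 0" "c > 0"
    "\<And>n p. 0 < p \<Longrightarrow> p \<le> \<delta> * n \<Longrightarrow> c * p\<^sup>2 \<le> (n * a + p * \<alpha>)\<^sup>2"
proof (cases "a = 0")
  case True
  with assms have "\<alpha>\<^sup>2 > 0" by simp
  with True show ?thesis
    by (intro that[of 1 "\<alpha>\<^sup>2"]) (simp_all add: power_mult_distrib)
next
  case False
  define \<delta> where "\<delta> = \<bar>a\<bar> / (2 * \<bar>\<alpha>\<bar> + 1)"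
  have \<delta>_pos: "\<delta> > 0" using False by (simp add: \<delta>_def)
  have bound: "p * (\<bar>\<alpha>\<bar> + 1) \<le> \<bar>n * a + p * \<alpha>\<bar>" if "0 < p" "p \<le> \<delta> * n" for n p
  proof -
    have "p * (2 * \<bar>\<alpha>\<bar> + 1) \<le> n * \<bar>a\<bar>"
      using that by (simp add: \<delta>_def field_simps)
    moreover have "0 < n"
      using that \<delta>_pos by (metis less_le_trans zero_less_mult_pos)
    then have "n * \<bar>a\<bar> - p * \<bar>\<alpha>\<bar> \<le> \<bar>n * a + p * \<alpha>\<bar>"
      using \<open>0 < p\<close> abs_triangle_ineq2[of "n * a" "- (p * \<alpha>)"] by (simp add: abs_mult)
    ultimately show ?thesis by (simp add: algebra_simps)
  qed
  show ?thesis
  proof (rule that[of \<delta> "(\<bar>\<alpha>\<bar> + 1)\<^sup>2"])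
    fix n p :: real
    assume "0 < p" "p \<le> \<delta> * n"
    then have "\<bar>p * (\<bar>\<alpha>\<bar> + 1)\<bar> \<le> \<bar>n * a + p * \<alpha>\<bar>"
      using bound[of p n] by simp
    then show "(\<bar>\<alpha>\<bar> + 1)\<^sup>2 * p\<^sup>2 \<le> (n * a + p * \<alpha>)\<^sup>2"
      by (simp only: abs_le_square_iff power_mult_distrib mult.commute)
  qed (simp_all add: \<delta>_pos add_pos_nonneg)
qed

theorem lemma3p13:
  fixes a \<alpha> :: real
  assumes "(a, \<alpha>) \<noteq> (0, 0)"
  shows "\<exists>\<delta>0 > 0. \<exists>c > 0. \<forall>(N::nat) (L::real) (P::int set) (\<phi>::int \<Rightarrow> real).
           L \<le> \<delta>0 * real N \<longrightarrow>
           P \<subseteq> {1..int N - 1} \<longrightarrow> P \<noteq> {} \<longrightarrow> real_of_int (Min P) < L \<longrightarrow>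
           \<phi> (-1) = (real N)^2 * a - real N * \<alpha> \<longrightarrow>
           \<phi> 0 = (real N)^2 * a \<longrightarrow>
           (\<forall>k\<in>P. \<phi> k = 0) \<longrightarrow>
           H N \<phi> \<ge> c * (real N)^2 / L"
proof -
  obtain \<delta> c where \<delta>: "\<delta> > 0" and c: "c > 0"
    and affine: "\<And>n p. 0 < p \<Longrightarrow> p \<le> \<delta> * n \<Longrightarrow> c * p\<^sup>2 \<le> (n * a + p * \<alpha>)\<^sup>2"
    using affine_form_lower_bound[OF assms] by blast
  have "H N \<phi> \<ge> c / 2 * (real N)\<^sup>2 / L"
    if "L \<le> \<delta> * real N" "P \<subseteq> {1..int N - 1}" "P \<noteq> {}" "real_of_int (Min P) < L"
      "\<phi> (-1) = (real N)\<^sup>2 * a - real N * \<alpha>" "\<phi> 0 = (real N)\<^sup>2 * a" "\<forall>k\<in>P. \<phi> k = 0"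
    for N L P \<phi>
  proof -
    define p where "p = nat (Min P)"
    have Min_P: "Min P \<in> P" using that(2,3) finite_subset by (intro Min_in) auto
    with that(2) have "1 \<le> Min P" "Min P \<le> int N - 1" by auto
    with Min_P have p: "int p = Min P" "1 \<le> p" "p \<le> N + 1" "\<phi> (int p) = 0" "real p < L"
      using that(4,7) by (auto simp: p_def)
    have "(real N)\<^sup>2 * (c * (real p)\<^sup>2) \<le> (real N)\<^sup>2 * (real N * a + real p * \<alpha>)\<^sup>2"
      using affine[of "real p" "real N"] p that(1) by (intro mult_left_mono) auto
    also have "\<dots> \<le> (real p)\<^sup>2 * (real p * (2 * H N \<phi>))"
      using boundary_term_sq_le_H_of_root[of p N \<phi>] p(3,4) that(5,6)
      by (simp add: power_mult_distrib power2_eq_square power3_eq_cube algebra_simps)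
    finally have "c * (real N)\<^sup>2 \<le> real p * (2 * H N \<phi>)"
      using p(2) by (simp add: algebra_simps mult_le_cancel_left)
    also have "\<dots> \<le> L * (2 * H N \<phi>)"
      using p(5) H_nonneg by (intro mult_right_mono) auto
    finally show ?thesis
      using p by (simp add: field_simps)
  qed
  then show ?thesis
    using \<delta> c by (intro exI[of _ \<delta>] conjI exI[of _ "c / 2"]) auto
qed

end
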